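(* Let $(M,d)$ be a compact metric space, $\mu$ a probability measure on $M$, $k:M\times M\to[0,1]$ measurable, $M^s\subseteq M$ measurable, and $\rho>0$. For a bounded measurable $f:M\setminus M^s\to\mathbb{R}$ define $A_\mu f:M\setminus M^s\to\mathbb{R}$ by $$(A_\mu f)(x)=\frac{\int_{M\setminus M^s}k(x,y)f(y)\,d\mu(y)}{\rho+\int_M k(x,y)\,d\mu(y)}.$$ Then $\|A_\mu f\|_\infty\le\frac{1}{1+\rho}\|f\|_\infty$, where $\|g\|_\infty=\sup_{x\in M\setminus M^s}|g(x)|$. *)

theory Defs
  imports "HOL-Probability.Probability"
begin

text \<open>Sup norm of g over a set S. The 0 is inserted so that the empty
  domain gets norm 0; for nonempty S this equals the supremum of the
  (nonnegative) values |g x|.\<close>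
definition sup_norm_on :: "'a set \<Rightarrow> ('a \<Rightarrow> real) \<Rightarrow> real" where
  "sup_norm_on S g = Sup (insert 0 ((\<lambda>x. \<bar>g x\<bar>) ` S))"

definition A_op :: "'a measure \<Rightarrow> ('a \<times> 'a \<Rightarrow> real) \<Rightarrow> 'a set \<Rightarrow> real
    \<Rightarrow> ('a \<Rightarrow> real) \<Rightarrow> 'a \<Rightarrow> real" where
  "A_op \<mu> k Ms \<rho> f x =
     (LINT y:(space \<mu> - Ms)|\<mu>. k (x, y) * f y) / (\<rho> + (LINT y|\<mu>. k (x, y)))"

end

theory Submission
  imports Defs
begin

text \<open>Since \<open>0 \<le> k \<le> 1\<close> and \<open>\<mu>\<close> is a probability measure, \<open>K x = \<integral> k(x,y) d\<mu>(y)\<close> lies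
  in \<open>[0,1]\<close>, and the numerator of \<open>A\<^sub>\<mu> f x\<close> is bounded by \<open>K x \<cdot> \<parallel>f\<parallel>\<^sub>\<infinity>\<close>. Hence
  \<open>|A\<^sub>\<mu> f x| \<le> \<parallel>f\<parallel>\<^sub>\<infinity> \<cdot> K x / (\<rho> + K x)\<close>, and \<open>t / (\<rho> + t)\<close> is increasing in \<open>t\<close>, so it
  is at most \<open>1 / (1 + \<rho>)\<close> on \<open>[0,1]\<close>.\<close>

lemma bdd_above_insert_abs_image:
  fixes g :: "'a \<Rightarrow> real"
  assumes "bounded (g ` S)"
  shows "bdd_above (insert 0 ((\<lambda>x. \<bar>g x\<bar>) ` S))"
proof -
  obtain B where "\<forall>y\<in>g ` S. norm y \<le> B"
    using assms bounded_iff by blast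
  then show ?thesis
    unfolding bdd_above_def by (auto intro!: exI[of _ "max 0 B"] simp: le_max_iff_disj)
qed

lemma sup_norm_on_nonneg:
  fixes g :: "'a \<Rightarrow> real"
  assumes "bounded (g ` S)"
  shows "0 \<le> sup_norm_on S g"
  unfolding sup_norm_on_def
  by (rule cSup_upper[OF _ bdd_above_insert_abs_image[OF assms]]) simp

lemma sup_norm_on_upper:
  fixes g :: "'a \<Rightarrow> real"
  assumes "bounded (g ` S)" and "x \<in> S"
  shows "\<bar>g x\<bar> \<le> sup_norm_on S g"
  unfolding sup_norm_on_def
  by (rule cSup_upper[OF _ bdd_above_insert_abs_image[OF assms(1)]]) (use assms(2) in simp)

lemma sup_norm_on_least:
  assumes "0 \<le> C" and "\<And>x. x \<in> S \<Longrightarrow> \<bar>g x\<bar> \<le> C"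
  shows "sup_norm_on S g \<le> C"
  unfolding sup_norm_on_def by (rule cSup_least) (use assms in auto)

lemma divide_add_le_one_divide_one_add:
  fixes t \<rho> :: real
  assumes "0 \<le> t" and "t \<le> 1" and "0 < \<rho>"
  shows "t / (\<rho> + t) \<le> 1 / (1 + \<rho>)"
proof -
  have "t * (1 + \<rho>) \<le> \<rho> + t"
    using assms by (simp add: algebra_simps mult_left_le_one_le)
  then show ?thesis
    using assms by (simp add: divide_simps)
qed

lemma set_integral_abs_le_weighted:
  fixes h f :: "'a \<Rightarrow> real"
  assumes "integrable M h"
    and "\<And>y. y \<in> space M \<Longrightarrow> 0 \<le> h y"
    and "\<And>y. y \<in> space M \<inter> S \<Longrightarrow> \<bar>f y\<bar> \<le> F" and "0 \<le> F"
  shows "\<bar>LINT y:S|M. h y * f y\<bar> \<le> (LINT y|M. h y) * F"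
proof -
  have "\<bar>LINT y:S|M. h y * f y\<bar> \<le> (LINT y|M. \<bar>indicator S y *\<^sub>R (h y * f y)\<bar>)"
    unfolding set_lebesgue_integral_def by (rule integral_abs_bound)
  also have "\<dots> \<le> (LINT y|M. h y * F)"
  proof (rule integral_mono')
    show "integrable M (\<lambda>y. h y * F)"
      using assms(1) by simp
    fix y assume y: "y \<in> space M"
    show "0 \<le> h y * F"
      using assms(2)[OF y] assms(4) by simp
    show "\<bar>indicator S y *\<^sub>R (h y * f y)\<bar> \<le> h y * F"
      using assms(2)[OF y] assms(3)[of y] assms(4) y
      by (cases "y \<in> S") (auto simp: abs_mult mult_left_mono)
  qed
  finally show ?thesis
    by simp
qed

lemma (in prob_space) A_op_abs_le:
  assumes "(\<lambda>y. k (x, y)) \<in> borel_measurable M"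
    and "\<And>y. y \<in> space M \<Longrightarrow> 0 \<le> k (x, y) \<and> k (x, y) \<le> 1"
    and "\<And>y. y \<in> space M - Ms \<Longrightarrow> \<bar>f y\<bar> \<le> F" and "0 \<le> F" and "0 < \<rho>"
  shows "\<bar>A_op M k Ms \<rho> f x\<bar> \<le> F / (1 + \<rho>)"
proof -
  define K where "K = (LINT y|M. k (x, y))"
  have int: "integrable M (\<lambda>y. k (x, y))"
    by (rule integrable_const_bound[where B=1]) (use assms(1,2) in auto)
  have "0 \<le> K"
    unfolding K_def by (intro integral_nonneg_AE AE_I2) (use assms(2) in auto)
  have "K \<le> 1"
    using integral_mono[OF int integrable_const, of 1] assms(2) by (auto simp: K_def prob_space)
  have num: "\<bar>LINT y:(space M - Ms)|M. k (x, y) * f y\<bar> \<le> K * F"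
    unfolding K_def
    by (rule set_integral_abs_le_weighted[OF int]) (use assms(2-4) in auto)
  have "\<bar>A_op M k Ms \<rho> f x\<bar> = \<bar>LINT y:(space M - Ms)|M. k (x, y) * f y\<bar> / (\<rho> + K)"
    unfolding A_op_def K_def[symmetric] using \<open>0 \<le> K\<close> \<open>0 < \<rho>\<close> by simp
  also have "\<dots> \<le> K / (\<rho> + K) * F"
    using num \<open>0 \<le> K\<close> \<open>0 < \<rho>\<close> by (simp add: divide_right_mono)
  also have "\<dots> \<le> 1 / (1 + \<rho>) * F"
    using divide_add_le_one_divide_one_add[OF \<open>0 \<le> K\<close> \<open>K \<le> 1\<close> \<open>0 < \<rho>\<close>] \<open>0 \<le> F\<close>
    by (rule mult_right_mono)
  finally show ?thesis
    by simp
qed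

theorem lemma2:
  fixes M :: "'a::metric_space set" and \<mu> :: "'a measure"
    and k :: "'a \<times> 'a \<Rightarrow> real" and Ms :: "'a set" and \<rho> :: real
    and f :: "'a \<Rightarrow> real"
  assumes "compact M"
    and "prob_space \<mu>"
    and "space \<mu> = M"
    and "sets \<mu> = sets (restrict_space borel M)"
    and "k \<in> borel_measurable (\<mu> \<Otimes>\<^sub>M \<mu>)"
    and "\<And>x y. x \<in> M \<Longrightarrow> y \<in> M \<Longrightarrow> 0 \<le> k (x, y) \<and> k (x, y) \<le> 1"
    and "Ms \<in> sets \<mu>"
    and "\<rho> > 0"
    and "f \<in> borel_measurable (restrict_space \<mu> (M - Ms))"
    and "bounded (f ` (M - Ms))"
  shows "sup_norm_on (M - Ms) (A_op \<mu> k Ms \<rho> f) \<le> 1 / (1 + \<rho>) * sup_norm_on (M - Ms) f"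
proof -
  interpret prob_space \<mu> by fact
  define F where "F = sup_norm_on (M - Ms) f"
  have "0 \<le> F"
    unfolding F_def using assms(10) by (rule sup_norm_on_nonneg)
  have "\<bar>A_op \<mu> k Ms \<rho> f x\<bar> \<le> F / (1 + \<rho>)" if "x \<in> M - Ms" for x
  proof (rule A_op_abs_le)
    show "(\<lambda>y. k (x, y)) \<in> borel_measurable \<mu>"
      by (rule measurable_Pair2[OF assms(5)]) (use that assms(3) in auto)
  qed (use that assms(3,6,8,10) \<open>0 \<le> F\<close> in \<open>auto simp: F_def intro: sup_norm_on_upper\<close>)
  then show ?thesis
    unfolding F_def[symmetric] using \<open>0 \<le> F\<close> \<open>0 < \<rho>\<close>
    by (intro sup_norm_on_least) auto
qed

end
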